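(* The preordering associated with the box $[-1,1]^n$ is included in the quadratic module of the unit ball. In particular, for every $d\in\mathbb N$, $$\mathcal O_d(1\pm X_i: i\in\{1,\dots,n\})\subset\mathcal Q_{d+n}(1-\|\mathbf X\|_2^2).$$
   Context: $\Sigma^2$ is the cone of sums of squares in $\mathbb R[X_1,\dots,X_n]$, $\|\mathbf X\|_2^2=\sum X_i^2$. For polynomials $h_1,\dots,h_k$: $\mathcal Q(h_1,\dots,h_k)=\Sigma^2+\sum_j\Sigma^2h_j$, $\mathcal Q_d(h_1,\dots,h_k)=\{s_0+\sum_js_jh_j: s_j\in\Sigma^2,\deg s_0\le d,\deg(s_jh_j)\le d\}$; the preordering is $\mathcal O(h_1,\dots,h_k)=\mathcal Q(\prod_{j\in J}h_j: J\subset\{1,\dots,k\})$ and $\mathcal O_d(h_1,\dots,h_k)=\mathcal Q_d(\prod_{j\in J}h_j:J\subset\{1,\dots,k\})$. Here the $2n$ generators are $1+X_i$ and $1-X_i$, $i=1,\dots,n$. *)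

theory Defs
  imports Complex_Main "HOL-Library.Poly_Mapping"
begin

text \<open>The polynomial ring R[X_1,...,X_n] is modelled by the polynomials whose monomials
only involve the variables 0,...,n-1 (variable X_(i+1) has index i).\<close>

type_synonym mpoly = "(nat \<Rightarrow>\<^sub>0 nat) \<Rightarrow>\<^sub>0 real"

definition Var :: "nat \<Rightarrow> mpoly" where
  "Var i = Poly_Mapping.single (Poly_Mapping.single i 1) 1"

definition mdeg :: "(nat \<Rightarrow>\<^sub>0 nat) \<Rightarrow> nat" where
  "mdeg m = (\<Sum>i\<in>Poly_Mapping.keys m. Poly_Mapping.lookup m i)"

text \<open>Total degree (the zero polynomial gets degree 0).\<close>
definition tdeg :: "mpoly \<Rightarrow> nat" where
  "tdeg p = Max (insert 0 (mdeg ` Poly_Mapping.keys p))"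

definition poly_in :: "nat \<Rightarrow> mpoly \<Rightarrow> bool" where
  "poly_in n p \<longleftrightarrow> (\<forall>m\<in>Poly_Mapping.keys p. Poly_Mapping.keys m \<subseteq> {..<n})"

definition SOS :: "nat \<Rightarrow> mpoly set" where
  "SOS n = {p. \<exists>qs. (\<forall>q\<in>set qs. poly_in n q) \<and> p = sum_list (map (\<lambda>q. q ^ 2) qs)}"

definition QM :: "nat \<Rightarrow> 'i set \<Rightarrow> ('i \<Rightarrow> mpoly) \<Rightarrow> mpoly set" where
  "QM n J h = {p. \<exists>s0 s. s0 \<in> SOS n \<and> (\<forall>j\<in>J. s j \<in> SOS n) \<and>
       p = s0 + (\<Sum>j\<in>J. s j * h j)}"

definition QM_deg :: "nat \<Rightarrow> nat \<Rightarrow> 'i set \<Rightarrow> ('i \<Rightarrow> mpoly) \<Rightarrow> mpoly set" where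
  "QM_deg n d J h = {p. \<exists>s0 s. s0 \<in> SOS n \<and> (\<forall>j\<in>J. s j \<in> SOS n) \<and>
       tdeg s0 \<le> d \<and> (\<forall>j\<in>J. tdeg (s j * h j) \<le> d) \<and>
       p = s0 + (\<Sum>j\<in>J. s j * h j)}"

definition PO :: "nat \<Rightarrow> 'i set \<Rightarrow> ('i \<Rightarrow> mpoly) \<Rightarrow> mpoly set" where
  "PO n J h = QM n (Pow J) (\<lambda>K. \<Prod>j\<in>K. h j)"

definition PO_deg :: "nat \<Rightarrow> nat \<Rightarrow> 'i set \<Rightarrow> ('i \<Rightarrow> mpoly) \<Rightarrow> mpoly set" where
  "PO_deg n d J h = QM_deg n d (Pow J) (\<lambda>K. \<Prod>j\<in>K. h j)"

definition box_gen :: "nat \<times> bool \<Rightarrow> mpoly" where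
  "box_gen ib = (if snd ib then 1 + Var (fst ib) else 1 - Var (fst ib))"

definition box_idx :: "nat \<Rightarrow> (nat \<times> bool) set" where
  "box_idx n = {..<n} \<times> UNIV"

definition ball_gen :: "nat \<Rightarrow> unit \<Rightarrow> mpoly" where
  "ball_gen n _ = 1 - (\<Sum>i<n. Var i ^ 2)"

end

theory Submission
  imports Defs
begin

text \<open>Write g = 1 - (X_1^2 + ... + X_n^2). The truncated quadratic module generated by the
single polynomial g is closed under products, with degree bounds adding:
(s1 + t1 g)(s2 + t2 g) = (s1 s2 + t1 t2 g^2) + (s1 t2 + t1 s2) g.
Since 1 - X_i^2 = g + (sum of X_j^2 for j distinct from i) and
1 +- X_i = (1 +- X_i)^2 / 2 + (1 - X_i^2) / 2, both lie in Q_2(g). Grouping a product of box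
generators by variable, the factors belonging to X_i multiply to 1, to 1 +- X_i or to 1 - X_i^2,
so a product of k generators lies in Q_(k+n)(g). Finally, multiplying a nonzero polynomial by
1 +- X_i raises its total degree, so a summand s * prod_(j in K) h_j of degree at most d has
deg s + |K| <= d and therefore lies in Q_(d+n)(g).\<close>

lemma mdeg_zero [simp]: "mdeg 0 = 0"
  by (simp add: mdeg_def)

lemma mdeg_single [simp]: "mdeg (Poly_Mapping.single i k) = k"
  by (simp add: mdeg_def)

lemma mdeg_add: "mdeg (a + b) = mdeg a + mdeg b"
  unfolding mdeg_def by (rule setsum_keys_plus_distrib) simp_all

lemma tdeg_le_iff: "tdeg p \<le> D \<longleftrightarrow> (\<forall>m\<in>Poly_Mapping.keys p. mdeg m \<le> D)"
  unfolding tdeg_def by (subst Max_le_iff) auto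

lemma mdeg_le_tdeg: "m \<in> Poly_Mapping.keys p \<Longrightarrow> mdeg m \<le> tdeg p"
  using tdeg_le_iff[of p "tdeg p"] by auto

lemma tdeg_attained:
  assumes "p \<noteq> 0"
  obtains m where "m \<in> Poly_Mapping.keys p" "mdeg m = tdeg p"
proof -
  have "tdeg p \<in> insert 0 (mdeg ` Poly_Mapping.keys p)"
    unfolding tdeg_def by (rule Max_in) auto
  moreover obtain m0 where "m0 \<in> Poly_Mapping.keys p"
    using assms by (metis keys_eq_empty ex_in_conv)
  ultimately show ?thesis
    using that mdeg_le_tdeg[of m0 p] by fastforce
qed

lemma tdeg_zero [simp]: "tdeg 0 = 0"
  by (simp add: tdeg_def)

lemma tdeg_one [simp]: "tdeg 1 = 0"
  by (simp add: tdeg_def)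

lemma tdeg_const: "tdeg (Poly_Mapping.single 0 c) = 0"
  by (simp add: tdeg_def)

lemma tdeg_Var: "tdeg (Var i) = 1"
  by (simp add: tdeg_def Var_def)

lemma tdeg_uminus [simp]: "tdeg (- p) = tdeg p"
  by (simp add: tdeg_def)

lemma tdeg_add_le: "tdeg p \<le> D \<Longrightarrow> tdeg q \<le> D \<Longrightarrow> tdeg (p + q) \<le> D"
  using keys_add[of p q] by (auto simp: tdeg_le_iff)

lemma tdeg_diff_le: "tdeg p \<le> D \<Longrightarrow> tdeg q \<le> D \<Longrightarrow> tdeg (p - q) \<le> D"
  using tdeg_add_le[of p D "- q"] by simp

lemma tdeg_sum_le: "(\<And>i. i \<in> I \<Longrightarrow> tdeg (f i) \<le> D) \<Longrightarrow> tdeg (sum f I) \<le> D"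
  by (induction I rule: infinite_finite_induct) (auto intro: tdeg_add_le)

lemma tdeg_mult_le: "tdeg p \<le> D1 \<Longrightarrow> tdeg q \<le> D2 \<Longrightarrow> tdeg (p * q) \<le> D1 + D2"
  using keys_mult[of p q] by (fastforce simp: tdeg_le_iff mdeg_add intro: add_mono)

lemma lookup_mult_Var:
  "Poly_Mapping.lookup (p * Var i) (m + Poly_Mapping.single i 1) = Poly_Mapping.lookup p m"
proof -
  let ?e = "Poly_Mapping.single i (1::nat)"
  have coeff: "(\<lambda>q. Poly_Mapping.lookup (Var i) q when m + ?e = l + q)
      = (\<lambda>q. if q = ?e then (1 when m = l) else 0)" for l
    by (auto simp: fun_eq_iff Var_def lookup_single when_def)
  show ?thesis
    unfolding lookup_mult coeff by (simp add: mult_when)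
qed

lemma tdeg_mult_box_gen:
  assumes "p \<noteq> 0"
  shows "tdeg p < tdeg (p * box_gen j)"
proof -
  obtain i b where j: "j = (i, b)"
    by force
  obtain m where m: "m \<in> Poly_Mapping.keys p" "mdeg m = tdeg p"
    using tdeg_attained[OF assms] by blast
  let ?mX = "m + Poly_Mapping.single i 1"
  have deg_mX: "mdeg ?mX = tdeg p + 1"
    using m by (simp add: mdeg_add)
  then have "Poly_Mapping.lookup p ?mX = 0"
    using mdeg_le_tdeg[of ?mX p] by (fastforce simp: in_keys_iff)
  then have "Poly_Mapping.lookup (p * box_gen j) ?mX = (if b then 1 else -1) * Poly_Mapping.lookup p m"
    using lookup_mult_Var[of p i m]
    by (simp add: j box_gen_def algebra_simps lookup_add lookup_minus)
  then have "?mX \<in> Poly_Mapping.keys (p * box_gen j)"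
    using m(1) by (simp add: in_keys_iff)
  then show ?thesis
    using mdeg_le_tdeg deg_mX by fastforce
qed

lemma tdeg_mult_prod_box_gen:
  assumes "finite K" "s \<noteq> 0"
  shows "tdeg s + card K \<le> tdeg (s * (\<Prod>j\<in>K. box_gen j))"
  using assms
proof (induction K arbitrary: s rule: finite_induct)
  case empty
  then show ?case by simp
next
  case (insert j K)
  have deg: "tdeg s < tdeg (s * box_gen j)"
    using insert.prems by (rule tdeg_mult_box_gen)
  then have "s * box_gen j \<noteq> 0"
    by auto
  then have "tdeg (s * box_gen j) + card K \<le> tdeg (s * box_gen j * (\<Prod>j\<in>K. box_gen j))"
    by (rule insert.IH)
  with deg show ?case
    using insert.hyps by (simp add: mult.assoc)
qed

lemma poly_in_zero: "poly_in n 0"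
  by (simp add: poly_in_def)

lemma poly_in_one: "poly_in n 1"
  by (simp add: poly_in_def)

lemma poly_in_const: "poly_in n (Poly_Mapping.single 0 c)"
  by (simp add: poly_in_def)

lemma poly_in_Var: "i < n \<Longrightarrow> poly_in n (Var i)"
  by (simp add: poly_in_def Var_def)

lemma poly_in_add: "poly_in n p \<Longrightarrow> poly_in n q \<Longrightarrow> poly_in n (p + q)"
  unfolding poly_in_def using keys_add[of p q] by blast

lemma poly_in_diff: "poly_in n p \<Longrightarrow> poly_in n q \<Longrightarrow> poly_in n (p - q)"
  using poly_in_add[of n p "- q"] by (simp add: poly_in_def)

lemma poly_in_mult:
  assumes "poly_in n p" "poly_in n q"
  shows "poly_in n (p * q)"
  unfolding poly_in_def
proof
  fix m assume "m \<in> Poly_Mapping.keys (p * q)"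
  then obtain a b where "m = a + b" "a \<in> Poly_Mapping.keys p" "b \<in> Poly_Mapping.keys q"
    using keys_mult[of p q] by blast
  then show "Poly_Mapping.keys m \<subseteq> {..<n}"
    using assms keys_add[of a b] unfolding poly_in_def by blast
qed

lemma poly_in_power: "poly_in n p \<Longrightarrow> poly_in n (p ^ k)"
  by (induction k) (auto intro: poly_in_mult poly_in_one)

lemma poly_in_sum: "(\<And>i. i \<in> I \<Longrightarrow> poly_in n (f i)) \<Longrightarrow> poly_in n (sum f I)"
  by (induction I rule: infinite_finite_induct) (auto intro: poly_in_add poly_in_zero)

lemma SOS_zero: "0 \<in> SOS n"
  unfolding SOS_def by (intro CollectI exI[of _ "[]"]) simp

lemma SOS_square: "poly_in n q \<Longrightarrow> q ^ 2 \<in> SOS n"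
  unfolding SOS_def by (intro CollectI exI[of _ "[q]"]) simp

lemma SOS_one: "1 \<in> SOS n"
  using SOS_square[OF poly_in_one] by simp

lemma SOS_add:
  assumes "a \<in> SOS n" "b \<in> SOS n"
  shows "a + b \<in> SOS n"
proof -
  obtain qs rs where "\<forall>q\<in>set qs. poly_in n q" "a = sum_list (map (\<lambda>q. q ^ 2) qs)"
      "\<forall>r\<in>set rs. poly_in n r" "b = sum_list (map (\<lambda>r. r ^ 2) rs)"
    using assms unfolding SOS_def by blast
  then show ?thesis
    unfolding SOS_def by (intro CollectI exI[of _ "qs @ rs"]) auto
qed

lemma SOS_square_mult: "poly_in n q \<Longrightarrow> b \<in> SOS n \<Longrightarrow> q ^ 2 * b \<in> SOS n"
proof -
  assume q: "poly_in n q" and "b \<in> SOS n"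
  then obtain rs where rs: "\<forall>r\<in>set rs. poly_in n r" "b = sum_list (map (\<lambda>r. r ^ 2) rs)"
    unfolding SOS_def by blast
  have "q ^ 2 * sum_list (map (\<lambda>r. r ^ 2) rs) = sum_list (map (\<lambda>r. r ^ 2) (map ((*) q) rs))"
    by (induction rs) (auto simp: algebra_simps power_mult_distrib)
  then show ?thesis
    using q rs unfolding SOS_def by (auto intro!: exI[of _ "map ((*) q) rs"] poly_in_mult)
qed

lemma SOS_mult: "a \<in> SOS n \<Longrightarrow> b \<in> SOS n \<Longrightarrow> a * b \<in> SOS n"
proof -
  assume "a \<in> SOS n" and b: "b \<in> SOS n"
  then obtain qs where qs: "\<forall>q\<in>set qs. poly_in n q" "a = sum_list (map (\<lambda>q. q ^ 2) qs)"
    unfolding SOS_def by blast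
  have "sum_list (map (\<lambda>q. q ^ 2) qs) * b \<in> SOS n"
    using qs(1) by (induction qs) (auto simp: distrib_right intro: SOS_add SOS_zero SOS_square_mult b)
  then show ?thesis
    using qs(2) by simp
qed

lemma SOS_in_QM_deg: "\<sigma> \<in> SOS n \<Longrightarrow> tdeg \<sigma> \<le> D \<Longrightarrow> \<sigma> \<in> QM_deg n D J h"
  unfolding QM_deg_def by (auto intro!: exI[of _ "\<lambda>_. 0"] SOS_zero)

lemma QM_deg_mono: "D \<le> E \<Longrightarrow> QM_deg n D J h \<subseteq> QM_deg n E J h"
  unfolding QM_deg_def by fastforce

lemma QM_deg_add:
  assumes "p \<in> QM_deg n D J h" "q \<in> QM_deg n D J h"
  shows "p + q \<in> QM_deg n D J h"
proof -
  obtain s0 s where s: "s0 \<in> SOS n" "\<forall>j\<in>J. s j \<in> SOS n" "tdeg s0 \<le> D"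
      "\<forall>j\<in>J. tdeg (s j * h j) \<le> D" "p = s0 + (\<Sum>j\<in>J. s j * h j)"
    using assms(1) unfolding QM_deg_def by blast
  obtain t0 t where t: "t0 \<in> SOS n" "\<forall>j\<in>J. t j \<in> SOS n" "tdeg t0 \<le> D"
      "\<forall>j\<in>J. tdeg (t j * h j) \<le> D" "q = t0 + (\<Sum>j\<in>J. t j * h j)"
    using assms(2) unfolding QM_deg_def by blast
  have "p + q = (s0 + t0) + (\<Sum>j\<in>J. (s j + t j) * h j)"
    unfolding s(5) t(5) distrib_right sum.distrib by (simp only: add_ac)
  moreover have "s0 + t0 \<in> SOS n" "tdeg (s0 + t0) \<le> D"
    using s(1,3) t(1,3) by (auto intro: SOS_add tdeg_add_le)
  moreover have "\<forall>j\<in>J. s j + t j \<in> SOS n" "\<forall>j\<in>J. tdeg ((s j + t j) * h j) \<le> D"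
    using s(2,4) t(2,4) unfolding distrib_right by (auto intro: SOS_add tdeg_add_le)
  ultimately show ?thesis
    unfolding QM_deg_def by (intro CollectI exI[of _ "s0 + t0"] exI[of _ "\<lambda>j. s j + t j"]) simp
qed

lemma QM_deg_sum:
  "(\<And>i. i \<in> I \<Longrightarrow> f i \<in> QM_deg n D J h) \<Longrightarrow> sum f I \<in> QM_deg n D J h"
  by (induction I rule: infinite_finite_induct) (auto intro: QM_deg_add SOS_in_QM_deg SOS_zero)

lemma QM_deg_subset_QM: "QM_deg n D J h \<subseteq> QM n J h"
  unfolding QM_deg_def QM_def by blast

lemma QM_eq_UN_QM_deg:
  assumes "finite J"
  shows "QM n J h = (\<Union>D. QM_deg n D J h)"
proof
  show "QM n J h \<subseteq> (\<Union>D. QM_deg n D J h)"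
  proof
    fix p assume "p \<in> QM n J h"
    then obtain s0 s where s: "s0 \<in> SOS n" "\<forall>j\<in>J. s j \<in> SOS n" "p = s0 + (\<Sum>j\<in>J. s j * h j)"
      unfolding QM_def by blast
    define D where "D = tdeg s0 + (\<Sum>j\<in>J. tdeg (s j * h j))"
    have "\<forall>j\<in>J. tdeg (s j * h j) \<le> D"
      using assms by (auto simp: D_def intro: trans_le_add2 member_le_sum)
    moreover have "tdeg s0 \<le> D"
      by (simp add: D_def)
    ultimately have "p \<in> QM_deg n D J h"
      using s unfolding QM_deg_def by blast
    then show "p \<in> (\<Union>D. QM_deg n D J h)"
      by blast
  qed
qed (use QM_deg_subset_QM in blast)

lemma PO_eq_UN_PO_deg: "finite J \<Longrightarrow> PO n J h = (\<Union>D. PO_deg n D J h)"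
  unfolding PO_def PO_deg_def by (simp add: QM_eq_UN_QM_deg)

lemma QM_deg_unit_iff:
  "p \<in> QM_deg n D {()} h \<longleftrightarrow>
     (\<exists>\<sigma> \<tau>. \<sigma> \<in> SOS n \<and> \<tau> \<in> SOS n \<and> tdeg \<sigma> \<le> D \<and> tdeg (\<tau> * h ()) \<le> D \<and> p = \<sigma> + \<tau> * h ())"
  unfolding QM_deg_def by (auto 0 3)

lemma QM_deg_unit_mult:
  assumes "poly_in n (h ())" "p \<in> QM_deg n D1 {()} h" "q \<in> QM_deg n D2 {()} h"
  shows "p * q \<in> QM_deg n (D1 + D2) {()} h"
proof -
  let ?g = "h ()"
  obtain s1 t1 where 1: "s1 \<in> SOS n" "t1 \<in> SOS n" "tdeg s1 \<le> D1" "tdeg (t1 * ?g) \<le> D1"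
      "p = s1 + t1 * ?g"
    using assms(2) unfolding QM_deg_unit_iff by blast
  obtain s2 t2 where 2: "s2 \<in> SOS n" "t2 \<in> SOS n" "tdeg s2 \<le> D2" "tdeg (t2 * ?g) \<le> D2"
      "q = s2 + t2 * ?g"
    using assms(3) unfolding QM_deg_unit_iff by blast
  define \<sigma> where "\<sigma> = s1 * s2 + (t1 * t2) * ?g ^ 2"
  define \<tau> where "\<tau> = s1 * t2 + t1 * s2"
  have "p * q = \<sigma> + \<tau> * ?g"
    using 1 2 by (simp add: \<sigma>_def \<tau>_def algebra_simps power2_eq_square)
  moreover have "\<sigma> \<in> SOS n" "\<tau> \<in> SOS n"
    using 1 2 assms(1) by (simp_all add: \<sigma>_def \<tau>_def SOS_add SOS_mult SOS_square)
  moreover have "tdeg \<sigma> \<le> D1 + D2"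
  proof -
    have "\<sigma> = s1 * s2 + (t1 * ?g) * (t2 * ?g)"
      by (simp add: \<sigma>_def algebra_simps power2_eq_square)
    then show ?thesis
      using 1 2 by (simp add: tdeg_add_le tdeg_mult_le)
  qed
  moreover have "tdeg (\<tau> * ?g) \<le> D1 + D2"
  proof -
    have "\<tau> * ?g = s1 * (t2 * ?g) + (t1 * ?g) * s2"
      by (simp add: \<tau>_def algebra_simps)
    then show ?thesis
      using 1 2 by (simp add: tdeg_add_le tdeg_mult_le)
  qed
  ultimately show ?thesis
    unfolding QM_deg_unit_iff by blast
qed

lemma QM_deg_unit_prod:
  assumes "poly_in n (h ())" "\<And>i. i \<in> I \<Longrightarrow> f i \<in> QM_deg n (D i) {()} h"
  shows "prod f I \<in> QM_deg n (sum D I) {()} h"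
  using assms(2)
proof (induction I rule: infinite_finite_induct)
  case (insert i I)
  then show ?case
    using QM_deg_unit_mult[where h = h, OF assms(1)] by simp
qed (simp_all add: SOS_in_QM_deg SOS_one)

lemma poly_in_ball_gen: "poly_in n (ball_gen n u)"
  unfolding ball_gen_def
  by (intro poly_in_diff poly_in_one poly_in_sum poly_in_power poly_in_Var) auto

lemma tdeg_Var_square: "tdeg (Var i ^ 2) \<le> 2"
  using tdeg_mult_le[of "Var i" 1 "Var i" 1] by (simp add: tdeg_Var power2_eq_square)

lemma one_minus_Var_square_in_QM_ball:
  assumes "i < n"
  shows "1 - Var i ^ 2 \<in> QM_deg n 2 {()} (ball_gen n)"
proof -
  have "(\<Sum>j<n. Var j ^ 2) = Var i ^ 2 + (\<Sum>j\<in>{..<n} - {i}. Var j ^ 2)"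
    using assms by (subst sum.remove[of _ i]) auto
  then have split: "1 - Var i ^ 2 = 1 * ball_gen n () + (\<Sum>j\<in>{..<n} - {i}. Var j ^ 2)"
    unfolding ball_gen_def by (simp add: algebra_simps)
  have "tdeg (ball_gen n ()) \<le> 2"
    unfolding ball_gen_def by (intro tdeg_diff_le tdeg_sum_le) (auto simp: tdeg_Var_square)
  then have "1 * ball_gen n () \<in> QM_deg n 2 {()} (ball_gen n)"
    unfolding QM_deg_unit_iff by (intro exI[of _ 0] exI[of _ 1]) (simp add: SOS_zero SOS_one)
  moreover have "(\<Sum>j\<in>{..<n} - {i}. Var j ^ 2) \<in> QM_deg n 2 {()} (ball_gen n)"
    by (intro QM_deg_sum SOS_in_QM_deg SOS_square poly_in_Var tdeg_Var_square) auto
  ultimately show ?thesis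
    unfolding split by (rule QM_deg_add)
qed

lemma box_gen_in_QM_ball:
  assumes "i < n"
  shows "box_gen (i, b) \<in> QM_deg n 2 {()} (ball_gen n)"
proof -
  define half :: mpoly where "half = Poly_Mapping.single 0 (1/2)"
  define y where "y = box_gen (i, b)"
  have "half = Poly_Mapping.single 0 (sqrt (1/2)) ^ 2"
    by (simp add: half_def power2_eq_square mult_single)
  then have "half \<in> SOS n"
    by (simp add: SOS_square poly_in_const)
  then have "half \<in> QM_deg n 0 {()} (ball_gen n)"
    by (simp add: SOS_in_QM_deg half_def tdeg_const)
  moreover have "y ^ 2 \<in> QM_deg n 2 {()} (ball_gen n)"
  proof -
    have "poly_in n y"
      using assms by (simp add: y_def box_gen_def poly_in_add poly_in_diff poly_in_one poly_in_Var)
    moreover have "tdeg y \<le> 1"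
      by (simp add: y_def box_gen_def tdeg_add_le tdeg_diff_le tdeg_Var)
    ultimately have "y ^ 2 \<in> SOS n" "tdeg (y ^ 2) \<le> 2"
      using SOS_square tdeg_mult_le[of y 1 y 1] by (simp_all add: power2_eq_square)
    then show ?thesis
      by (rule SOS_in_QM_deg)
  qed
  ultimately have "half * y ^ 2 + half * (1 - Var i ^ 2) \<in> QM_deg n (0 + 2) {()} (ball_gen n)"
    using one_minus_Var_square_in_QM_ball[OF assms]
    by (intro QM_deg_add QM_deg_unit_mult poly_in_ball_gen)
  moreover have "half * y ^ 2 + half * (1 - Var i ^ 2) = (half + half) * y"
    by (cases b) (simp_all add: y_def box_gen_def algebra_simps power2_eq_square)
  moreover have "half + half = 1"
    by (simp add: half_def flip: single_add)
  ultimately show ?thesis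
    by (simp only: y_def add_0 mult_1)
qed

lemma prod_box_gen_block_in_QM_ball:
  assumes "i < n"
  shows "(\<Prod>b\<in>B. box_gen (i, b)) \<in> QM_deg n (card B + 1) {()} (ball_gen n)"
proof -
  have "B \<in> Pow {False, True}"
    by (simp flip: UNIV_bool)
  then consider "B = {}" | b where "B = {b}" | "B = {False, True}"
    by (simp add: Pow_insert) blast
  then show ?thesis
  proof cases
    case 1
    then show ?thesis
      by (simp add: SOS_in_QM_deg SOS_one)
  next
    case 2
    then show ?thesis
      using box_gen_in_QM_ball[OF assms] by (simp add: numeral_2_eq_2)
  next
    case 3
    then have "(\<Prod>b\<in>B. box_gen (i, b)) = 1 - Var i ^ 2"
      by (simp add: box_gen_def algebra_simps power2_eq_square)
    moreover have "card B + 1 = 3"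
      using 3 by simp
    ultimately show ?thesis
      using QM_deg_mono[of 2 3] one_minus_Var_square_in_QM_ball[OF assms] by auto
  qed
qed

lemma prod_box_gen_in_QM_ball:
  assumes "K \<subseteq> box_idx n"
  shows "(\<Prod>j\<in>K. box_gen j) \<in> QM_deg n (card K + n) {()} (ball_gen n)"
proof -
  define B where "B i = {b. (i, b) \<in> K}" for i
  have K: "K = Sigma {..<n} B"
    using assms by (auto simp: box_idx_def B_def)
  have "(\<Prod>i<n. \<Prod>b\<in>B i. box_gen (i, b)) \<in> QM_deg n (\<Sum>i<n. card (B i) + 1) {()} (ball_gen n)"
    by (intro QM_deg_unit_prod[where h = "ball_gen n"] poly_in_ball_gen prod_box_gen_block_in_QM_ball)
      simp
  moreover have "(\<Prod>i<n. \<Prod>b\<in>B i. box_gen (i, b)) = (\<Prod>j\<in>K. box_gen j)"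
    unfolding K by (simp add: prod.Sigma)
  moreover have "(\<Sum>i<n. card (B i) + 1) = card K + n"
    unfolding K sum.distrib by (simp add: card_SigmaI)
  ultimately show ?thesis
    by simp
qed

lemma PO_deg_box_subset_QM_deg_ball:
  "PO_deg n d (box_idx n) box_gen \<subseteq> QM_deg n (d + n) {()} (ball_gen n)"
proof
  fix p assume "p \<in> PO_deg n d (box_idx n) box_gen"
  then obtain s0 s where s: "s0 \<in> SOS n" "\<forall>K\<in>Pow (box_idx n). s K \<in> SOS n" "tdeg s0 \<le> d"
      "\<forall>K\<in>Pow (box_idx n). tdeg (s K * (\<Prod>j\<in>K. box_gen j)) \<le> d"
      "p = s0 + (\<Sum>K\<in>Pow (box_idx n). s K * (\<Prod>j\<in>K. box_gen j))"
    unfolding PO_deg_def QM_deg_def by blast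
  have "s K * (\<Prod>j\<in>K. box_gen j) \<in> QM_deg n (d + n) {()} (ball_gen n)"
    if K: "K \<subseteq> box_idx n" for K
  proof (cases "s K = 0")
    case True
    then show ?thesis
      by (simp add: SOS_in_QM_deg SOS_zero)
  next
    case False
    have "finite K"
      using K by (rule finite_subset) (simp add: box_idx_def)
    then have "tdeg (s K) + card K \<le> d"
      using tdeg_mult_prod_box_gen[OF _ False] s(4) K by (meson PowI order_trans)
    moreover have "s K * (\<Prod>j\<in>K. box_gen j) \<in> QM_deg n (tdeg (s K) + (card K + n)) {()} (ball_gen n)"
      using s(2) K
      by (intro QM_deg_unit_mult poly_in_ball_gen SOS_in_QM_deg prod_box_gen_in_QM_ball) auto
    ultimately show ?thesis
      using QM_deg_mono[of "tdeg (s K) + (card K + n)" "d + n"] by auto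
  qed
  then have "(\<Sum>K\<in>Pow (box_idx n). s K * (\<Prod>j\<in>K. box_gen j)) \<in> QM_deg n (d + n) {()} (ball_gen n)"
    by (intro QM_deg_sum) auto
  moreover have "s0 \<in> QM_deg n (d + n) {()} (ball_gen n)"
    using s(1,3) by (intro SOS_in_QM_deg) auto
  ultimately show "p \<in> QM_deg n (d + n) {()} (ball_gen n)"
    unfolding s(5) by (rule QM_deg_add[rotated])
qed

theorem mainTheorem13:
  fixes n :: nat
  shows "PO n (box_idx n) box_gen \<subseteq> QM n {()} (ball_gen n)
    \<and> (\<forall>d. PO_deg n d (box_idx n) box_gen \<subseteq> QM_deg n (d + n) {()} (ball_gen n))"
proof (intro conjI allI)
  have "finite (box_idx n)"
    by (simp add: box_idx_def)
  then show "PO n (box_idx n) box_gen \<subseteq> QM n {()} (ball_gen n)"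
    using PO_deg_box_subset_QM_deg_ball QM_deg_subset_QM by (fastforce simp: PO_eq_UN_PO_deg)
qed (rule PO_deg_box_subset_QM_deg_ball)

end
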